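(* Let $S$ be an intra-regular $\Gamma$-AG$^{**}$-groupoid. Then every two-sided $\Gamma$-ideal of $S$ is $\Gamma$-prime if and only if $S$ is $\Gamma$-totally ordered under inclusion, i.e. for any two-sided $\Gamma$-ideals $P,Q$ of $S$, either $P\subseteq Q$ or $Q\subseteq P$.
   Context: Let $S$ and $\Gamma$ be nonempty sets with a map $S\times\Gamma\times S\to S$, $(x,\gamma,y)\mapsto x\gamma y$. $S$ is a $\Gamma$-AG-groupoid if $(x\gamma y)\delta z=(z\gamma y)\delta x$ for all $x,y,z\in S$, $\gamma,\delta\in\Gamma$; it is a $\Gamma$-AG$^{**}$-groupoid if moreover $a\alpha(b\beta c)=b\alpha(a\beta c)$ for all $a,b,c\in S$, $\alpha,\beta\in\Gamma$. For subsets $A,B\subseteq S$, $A\Gamma B=\{a\gamma b: a\in A,\gamma\in\Gamma,b\in B\}$. $S$ is intra-regular if for every $a\in S$ there exist $x,y\in S$ and $\beta,\gamma,\delta\in\Gamma$ with $a=(x\beta(a\delta a))\gamma y$. A nonempty subset $A$ is a two-sided $\Gamma$-ideal if $S\Gamma A\subseteq A$ and $A\Gamma S\subseteq A$. A two-sided $\Gamma$-ideal $P$ is $\Gamma$-prime if for all two-sided $\Gamma$-ideals $A,B$ of $S$, $A\Gamma B\subseteq P$ implies $A\subseteq P$ or $B\subseteq P$. *)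

theory Defs
  imports Main
begin

(* S is modelled by the type 'a, Gamma by the type 'g (types are nonempty);
   the ternary operation x gamma y is  op x gamma y. *)

definition gamma_AG_groupoid :: "('a \<Rightarrow> 'g \<Rightarrow> 'a \<Rightarrow> 'a) \<Rightarrow> bool" where
  "gamma_AG_groupoid op \<longleftrightarrow>
     (\<forall>x y z \<gamma> \<delta>. op (op x \<gamma> y) \<delta> z = op (op z \<gamma> y) \<delta> x)"

definition gamma_AG_ss_groupoid :: "('a \<Rightarrow> 'g \<Rightarrow> 'a \<Rightarrow> 'a) \<Rightarrow> bool" where
  "gamma_AG_ss_groupoid op \<longleftrightarrow> gamma_AG_groupoid op \<and>
     (\<forall>a b c \<alpha> \<beta>. op a \<alpha> (op b \<beta> c) = op b \<alpha> (op a \<beta> c))"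

definition gprod :: "('a \<Rightarrow> 'g \<Rightarrow> 'a \<Rightarrow> 'a) \<Rightarrow> 'a set \<Rightarrow> 'a set \<Rightarrow> 'a set" where
  "gprod op A B = {op a \<gamma> b | a \<gamma> b. a \<in> A \<and> b \<in> B}"

definition intra_regular :: "('a \<Rightarrow> 'g \<Rightarrow> 'a \<Rightarrow> 'a) \<Rightarrow> bool" where
  "intra_regular op \<longleftrightarrow>
     (\<forall>a. \<exists>x y \<beta> \<gamma> \<delta>. a = op (op x \<beta> (op a \<delta> a)) \<gamma> y)"

definition two_sided_ideal :: "('a \<Rightarrow> 'g \<Rightarrow> 'a \<Rightarrow> 'a) \<Rightarrow> 'a set \<Rightarrow> bool" where
  "two_sided_ideal op A \<longleftrightarrow> A \<noteq> {} \<and>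
     gprod op UNIV A \<subseteq> A \<and> gprod op A UNIV \<subseteq> A"

definition gamma_prime :: "('a \<Rightarrow> 'g \<Rightarrow> 'a \<Rightarrow> 'a) \<Rightarrow> 'a set \<Rightarrow> bool" where
  "gamma_prime op P \<longleftrightarrow> two_sided_ideal op P \<and>
     (\<forall>A B. two_sided_ideal op A \<longrightarrow> two_sided_ideal op B \<longrightarrow>
        gprod op A B \<subseteq> P \<longrightarrow> A \<subseteq> P \<or> B \<subseteq> P)"

definition gamma_totally_ordered :: "('a \<Rightarrow> 'g \<Rightarrow> 'a \<Rightarrow> 'a) \<Rightarrow> bool" where
  "gamma_totally_ordered op \<longleftrightarrow>
     (\<forall>P Q. two_sided_ideal op P \<longrightarrow> two_sided_ideal op Q \<longrightarrow> P \<subseteq> Q \<or> Q \<subseteq> P)"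

end

theory Submission
  imports Defs
begin

(* In any Gamma-groupoid the product A Gamma B of two two-sided
   ideals lies in A \<inter> B, and A \<inter> B is again a two-sided ideal.  Hence, if every
   ideal is prime, primality of P \<inter> Q applied to P Gamma Q \<subseteq> P \<inter> Q yields
   P \<subseteq> Q or Q \<subseteq> P; this direction needs no hypothesis on S.
   Conversely, in an intra-regular Gamma-AG**-groupoid every ideal A is
   idempotent, A \<subseteq> A Gamma A, because the two groupoid laws rewrite
   a = (x b (a d a)) g y  into  a = (y b (x d a)) g a.  If the ideals are totally
   ordered and A Gamma B \<subseteq> P with, say, A \<subseteq> B, then A \<subseteq> A Gamma A \<subseteq> A Gamma B \<subseteq> P,
   so P is prime. *)

lemma gprod_mono:
  assumes "A \<subseteq> A'" "B \<subseteq> B'"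
  shows "gprod op A B \<subseteq> gprod op A' B'"
  using assms unfolding gprod_def by blast

lemma gprod_ideals_subset_inter:
  assumes "two_sided_ideal op A" "two_sided_ideal op B"
  shows "gprod op A B \<subseteq> A \<inter> B"
  using assms unfolding two_sided_ideal_def gprod_def by blast

text \<open>Two-sided ideals are closed under intersection; nonemptiness of the
  intersection is witnessed by a product of an element of each ideal.\<close>

lemma two_sided_ideal_inter:
  assumes "two_sided_ideal op A" "two_sided_ideal op B"
  shows "two_sided_ideal op (A \<inter> B)"
proof -
  obtain a b where "a \<in> A" "b \<in> B"
    using assms unfolding two_sided_ideal_def by blast
  then have "op a \<gamma> b \<in> A \<inter> B" for \<gamma>
    using gprod_ideals_subset_inter[OF assms] unfolding gprod_def by blast
  then show ?thesis
    using assms unfolding two_sided_ideal_def gprod_def by blast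
qed

lemma intra_regular_ideal_idempotent:
  assumes AGss: "gamma_AG_ss_groupoid op" and reg: "intra_regular op"
    and A: "two_sided_ideal op A"
  shows "A \<subseteq> gprod op A A"
proof
  fix a assume aA: "a \<in> A"
  obtain x y \<beta> \<gamma> \<delta> where a: "a = op (op x \<beta> (op a \<delta> a)) \<gamma> y"
    using reg unfolding intra_regular_def by blast
  have medial: "op x \<beta> (op a \<delta> a) = op a \<beta> (op x \<delta> a)"
    using AGss unfolding gamma_AG_ss_groupoid_def by blast
  have left_invertive: "op (op a \<beta> (op x \<delta> a)) \<gamma> y = op (op y \<beta> (op x \<delta> a)) \<gamma> a"
    using AGss unfolding gamma_AG_ss_groupoid_def gamma_AG_groupoid_def by blast
  have factor: "a = op (op y \<beta> (op x \<delta> a)) \<gamma> a"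
    using a medial left_invertive by simp
  have "op y \<beta> (op x \<delta> a) \<in> A"
    using A aA unfolding two_sided_ideal_def gprod_def by blast
  then show "a \<in> gprod op A A"
    using factor aA unfolding gprod_def by blast
qed

lemma all_ideals_prime_imp_totally_ordered:
  assumes "\<forall>P. two_sided_ideal op P \<longrightarrow> gamma_prime op P"
  shows "gamma_totally_ordered op"
  unfolding gamma_totally_ordered_def
proof (intro allI impI)
  fix P Q assume P: "two_sided_ideal op P" and Q: "two_sided_ideal op Q"
  have "gamma_prime op (P \<inter> Q)"
    using assms two_sided_ideal_inter[OF P Q] by blast
  then have "P \<subseteq> P \<inter> Q \<or> Q \<subseteq> P \<inter> Q"
    using P Q gprod_ideals_subset_inter[OF P Q] unfolding gamma_prime_def by blast
  then show "P \<subseteq> Q \<or> Q \<subseteq> P" by blast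
qed

lemma idempotent_totally_ordered_imp_prime:
  assumes idem: "\<And>A. two_sided_ideal op A \<Longrightarrow> A \<subseteq> gprod op A A"
    and total: "gamma_totally_ordered op"
    and P: "two_sided_ideal op P"
  shows "gamma_prime op P"
  unfolding gamma_prime_def
proof (intro conjI P allI impI)
  fix A B assume A: "two_sided_ideal op A" and B: "two_sided_ideal op B"
    and AB: "gprod op A B \<subseteq> P"
  have "A \<subseteq> B \<or> B \<subseteq> A"
    using total A B unfolding gamma_totally_ordered_def by blast
  then show "A \<subseteq> P \<or> B \<subseteq> P"
  proof
    assume "A \<subseteq> B"
    then have "gprod op A A \<subseteq> gprod op A B" by (rule gprod_mono[OF order_refl])
    then show ?thesis using idem[OF A] AB by blast
  next
    assume "B \<subseteq> A"
    then have "gprod op B B \<subseteq> gprod op A B" by (rule gprod_mono[OF _ order_refl])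
    then show ?thesis using idem[OF B] AB by blast
  qed
qed

theorem mainTheorem18:
  fixes op :: "'a \<Rightarrow> 'g \<Rightarrow> 'a \<Rightarrow> 'a"
  assumes "gamma_AG_ss_groupoid op"
    and "intra_regular op"
  shows "(\<forall>P. two_sided_ideal op P \<longrightarrow> gamma_prime op P) \<longleftrightarrow> gamma_totally_ordered op"
proof
  assume "\<forall>P. two_sided_ideal op P \<longrightarrow> gamma_prime op P"
  then show "gamma_totally_ordered op"
    by (rule all_ideals_prime_imp_totally_ordered)
next
  assume "gamma_totally_ordered op"
  then show "\<forall>P. two_sided_ideal op P \<longrightarrow> gamma_prime op P"
    using idempotent_totally_ordered_imp_prime
      intra_regular_ideal_idempotent[OF assms] by blast
qed

end
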